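(* Let $\mu$ be a critical offspring distribution, let $X_1,X_2,\dots$ be i.i.d. with $\mathbf P(X_1=k)=\mu_{k+1}$ for $k\ge-1$, and $S_m=X_1+\dots+X_m$ ($S_0=0$). For every $\varepsilon>0$ there exists $\delta>0$ such that for all sufficiently large $n$ with $\mathbf P(S_n=-1)>0$, \[ \mathbf P\Big(\max_{0\le m\le n}|S_m|\ge\varepsilon n\ \Big|\ S_n=-1\Big)\le e^{-\delta n}. \]
   Context: An offspring distribution is a probability measure $\mu=(\mu_k)_{k\ge0}$ on $\mathbb Z_+$; it is critical if $\sum_kk\mu_k=1$. *)

theory Defs
  imports "HOL-Probability.Probability"
begin

text \<open>Critical offspring distribution: a pmf on the naturals with mean 1.
  (If the mean were infinite, the Bochner expectation would be 0, not 1.)\<close>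
definition critical_offspring :: "nat pmf \<Rightarrow> bool" where
  "critical_offspring \<mu> \<longleftrightarrow> measure_pmf.expectation \<mu> real = 1"

definition step_pmf :: "nat pmf \<Rightarrow> int pmf" where
  "step_pmf \<mu> = map_pmf (\<lambda>k. int k - 1) \<mu>"

text \<open>Joint law of the i.i.d. steps X_1..X_n, indexed by i < n (X_{i+1} = omega i).\<close>
definition steps_pmf :: "nat pmf \<Rightarrow> nat \<Rightarrow> (nat \<Rightarrow> int) pmf" where
  "steps_pmf \<mu> n = Pi_pmf {..<n} 0 (\<lambda>_. step_pmf \<mu>)"

definition walk :: "(nat \<Rightarrow> int) \<Rightarrow> nat \<Rightarrow> int" where
  "walk \<omega> m = (\<Sum>i<m. \<omega> i)"

end

theory Submission
  imports Defs "HOL-Real_Asymp.Real_Asymp"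
begin

text \<open>The numerator and the denominator of the conditional probability live on different scales.
  The steps are bounded below by \<open>-1\<close> and centred, so downward deviations of partial sums have
  Chernoff bounds: a point \<open>S\<^sub>m \<le> -\<epsilon>n\<close>, or on \<open>S\<^sub>n \<le> 0\<close> a point \<open>S\<^sub>m \<ge> \<epsilon>n\<close>, makes some
  block of steps drift down by \<open>\<epsilon>n\<close>, which costs \<open>exp (-a n)\<close>. The point probability
  \<open>P(S\<^sub>n = -1)\<close>, when positive, decays only subexponentially: by the weak law some value
  \<open>j = o(n)\<close> carries subexponential mass, and \<open>o(n)\<close> explicit steps of sizes \<open>-1\<close> and
  \<open>d - 1\<close> (where \<open>\<mu>\<^sub>0 > 0\<close> and \<open>\<mu>\<^sub>d > 0\<close> for some \<open>d \<ge> 2\<close>, as \<open>\<mu>\<close> is critical) lead from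
  \<open>j\<close> back to \<open>0\<close>; superadditivity of \<open>log P(S\<^sub>n = x)\<close> along the residue classes of this
  return time spreads the bound to all large \<open>n\<close>.\<close>

section \<open>Exponential moments and tail bounds for i.i.d. sums\<close>

lemma abs_exp_minus_one_le: "\<bar>exp a - 1\<bar> \<le> \<bar>a\<bar> * exp (max a 0)" for a :: real
proof (cases "a \<ge> 0")
  case True
  have "1 - a \<le> exp (-a)" using exp_ge_add_one_self[of "-a"] by simp
  hence "exp a * (1 - a) \<le> exp a * exp (-a)" by (intro mult_left_mono) auto
  hence "exp a - a * exp a \<le> 1" by (simp add: algebra_simps exp_minus_inverse)
  moreover have "exp a \<ge> 1" using True by simp
  ultimately show ?thesis using True by (simp add: max_def)
next
  case False
  have "1 + a \<le> exp a" using exp_ge_add_one_self[of a] by simp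
  moreover have "exp a \<le> 1" using False by simp
  ultimately have "\<bar>exp a - 1\<bar> \<le> - a" by (simp only: abs_if split: if_split) linarith
  then show ?thesis using False by (simp add: max_def)
qed

lemma divide_le_max_zero:
  fixes z s B :: real
  assumes "1 \<le> s" and "z \<le> B"
  shows "z / s \<le> max B 0"
proof (cases "z \<ge> 0")
  case True
  then have "z / s \<le> z / 1" using assms(1) by (intro divide_left_mono) auto
  with assms(2) show ?thesis by simp
next
  case False
  then have "z / s < 0" using assms(1) by (intro divide_neg_pos) auto
  then show ?thesis by simp
qed

lemma tendsto_expectation_exp_difference_quotient:
  fixes p :: "'a pmf" and Z :: "'a \<Rightarrow> real"
  assumes int: "integrable (measure_pmf p) Z" and bnd: "\<And>x. x \<in> set_pmf p \<Longrightarrow> Z x \<le> B"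
  shows "(\<lambda>i. measure_pmf.expectation p (\<lambda>x. (exp (Z x / (real i + 1)) - 1) * (real i + 1)))
           \<longlonglongrightarrow> measure_pmf.expectation p Z"
proof (rule integral_dominated_convergence[where w="\<lambda>x. \<bar>Z x\<bar> * exp (max B 0)"])
  show "integrable (measure_pmf p) (\<lambda>x. \<bar>Z x\<bar> * exp (max B 0))" using int by auto
  show "AE x in measure_pmf p. (\<lambda>i. (exp (Z x / (real i + 1)) - 1) * (real i + 1)) \<longlonglongrightarrow> Z x"
  proof (intro AE_I2)
    fix x
    show "(\<lambda>i::nat. (exp (Z x / (real i + 1)) - 1) * (real i + 1)) \<longlonglongrightarrow> Z x" by real_asymp
  qed
  show "AE x in measure_pmf p.
          norm ((exp (Z x / (real i + 1)) - 1) * (real i + 1)) \<le> \<bar>Z x\<bar> * exp (max B 0)" for i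
  proof (intro AE_pmfI)
    fix x assume "x \<in> set_pmf p"
    then have "Z x / (real i + 1) \<le> max B 0" by (intro divide_le_max_zero bnd) auto
    then have "max (Z x / (real i + 1)) 0 \<le> max B 0" by simp
    have "\<bar>exp (Z x / (real i + 1)) - 1\<bar>
            \<le> \<bar>Z x / (real i + 1)\<bar> * exp (max (Z x / (real i + 1)) 0)"
      by (rule abs_exp_minus_one_le)
    also have "\<dots> \<le> \<bar>Z x / (real i + 1)\<bar> * exp (max B 0)"
      using \<open>max (Z x / (real i + 1)) 0 \<le> max B 0\<close> by (intro mult_left_mono) auto
    also have "\<dots> = \<bar>Z x\<bar> * exp (max B 0) / (real i + 1)" by (simp add: abs_divide)
    finally show "norm ((exp (Z x / (real i + 1)) - 1) * (real i + 1)) \<le> \<bar>Z x\<bar> * exp (max B 0)"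
      using pos_le_divide_eq[of "real i + 1"] by (simp add: abs_mult)
  qed
qed auto

text \<open>The difference quotient tends to \<open>E Z < c\<close>, so for some small \<open>\<theta> = 1 / (i + 1)\<close> we
  get \<open>E exp (\<theta> Z) < 1 + \<theta> c \<le> exp (\<theta> c)\<close>.\<close>
lemma exp_moment_le_exp:
  fixes p :: "'a pmf" and Z :: "'a \<Rightarrow> real"
  assumes int: "integrable (measure_pmf p) Z" and bnd: "\<And>x. x \<in> set_pmf p \<Longrightarrow> Z x \<le> B"
    and mean: "measure_pmf.expectation p Z \<le> 0" and c: "c > 0"
  shows "\<exists>\<theta>>0. integrable (measure_pmf p) (\<lambda>x. exp (\<theta> * Z x)) \<and>
           measure_pmf.expectation p (\<lambda>x. exp (\<theta> * Z x)) \<le> exp (\<theta> * c)"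
proof -
  have "\<forall>\<^sub>F i in sequentially.
          measure_pmf.expectation p (\<lambda>x. (exp (Z x / (real i + 1)) - 1) * (real i + 1)) < c"
    using mean c by (intro order_tendstoD(2)[OF tendsto_expectation_exp_difference_quotient[OF int bnd]]) auto
  then obtain i where i:
    "measure_pmf.expectation p (\<lambda>x. (exp (Z x / (real i + 1)) - 1) * (real i + 1)) < c"
    by (auto simp: eventually_sequentially)
  have int_exp: "integrable (measure_pmf p) (\<lambda>x. exp (Z x / (real i + 1)))"
  proof (rule measure_pmf.integrable_const_bound[where B="exp (max B 0)"])
    show "AE x in measure_pmf p. norm (exp (Z x / (real i + 1))) \<le> exp (max B 0)"
    proof (rule AE_pmfI)
      fix x assume "x \<in> set_pmf p"
      then have "Z x / (real i + 1) \<le> max B 0" by (intro divide_le_max_zero bnd) auto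
      then show "norm (exp (Z x / (real i + 1))) \<le> exp (max B 0)" by simp
    qed
  qed simp
  have "measure_pmf.expectation p (\<lambda>x. (exp (Z x / (real i + 1)) - 1) * (real i + 1))
      = (measure_pmf.expectation p (\<lambda>x. exp (Z x / (real i + 1))) - 1) * (real i + 1)"
    using int_exp by (simp add: Bochner_Integration.integral_diff)
  with i have "measure_pmf.expectation p (\<lambda>x. exp (Z x / (real i + 1))) - 1 < c / (real i + 1)"
    by (simp add: pos_less_divide_eq)
  then have "measure_pmf.expectation p (\<lambda>x. exp (Z x / (real i + 1))) < 1 + c / (real i + 1)"
    by simp
  also have "\<dots> \<le> exp (c / (real i + 1))" using exp_ge_add_one_self[of "c / (real i + 1)"] by simp
  finally show ?thesis using int_exp by (intro exI[of _ "1 / (real i + 1)"]) simp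
qed

lemma tendsto_expectation_excess:
  fixes p :: "'a pmf" and Z :: "'a \<Rightarrow> real"
  assumes int: "integrable (measure_pmf p) Z"
  shows "(\<lambda>K::nat. measure_pmf.expectation p (\<lambda>x. max (Z x - real K) 0)) \<longlonglongrightarrow> 0"
proof -
  have "(\<lambda>K::nat. measure_pmf.expectation p (\<lambda>x. max (Z x - real K) 0))
          \<longlonglongrightarrow> measure_pmf.expectation p (\<lambda>x. 0)"
  proof (rule integral_dominated_convergence[where w="\<lambda>x. \<bar>Z x\<bar>"])
    show "AE x in measure_pmf p. (\<lambda>K. max (Z x - real K) 0) \<longlonglongrightarrow> 0"
    proof (intro AE_I2 tendsto_eventually)
      fix x
      show "\<forall>\<^sub>F K in sequentially. max (Z x - real K) 0 = 0"
        using eventually_ge_at_top[of "nat \<lceil>Z x\<rceil>"] by eventually_elim linarith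
    qed
  qed (use int in auto)
  then show ?thesis by simp
qed

lemma component_Pi_pmf_lessThan:
  fixes n :: nat
  assumes "i < n"
  shows "map_pmf (\<lambda>\<omega>. \<omega> i) (Pi_pmf {..<n} d (\<lambda>_. p)) = p"
  using assms by (simp add: Pi_pmf_component)

lemma
  fixes p :: "'a pmf" and g :: "'a \<Rightarrow> real"
  assumes A: "finite A" and I: "I \<subseteq> A" and int: "integrable (measure_pmf p) (\<lambda>x. exp (g x))"
  shows integrable_exp_sum_Pi_pmf:
      "integrable (measure_pmf (Pi_pmf A d (\<lambda>_. p))) (\<lambda>\<omega>. exp (\<Sum>i\<in>I. g (\<omega> i)))"
    and expectation_exp_sum_Pi_pmf:
      "measure_pmf.expectation (Pi_pmf A d (\<lambda>_. p)) (\<lambda>\<omega>. exp (\<Sum>i\<in>I. g (\<omega> i)))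
         = measure_pmf.expectation p (\<lambda>x. exp (g x)) ^ card I"
proof -
  define f where "f i = (if i \<in> I then (\<lambda>x. exp (g x)) else (\<lambda>_. 1))" for i
  have I_fin: "finite I" using A I finite_subset by blast
  have prod_eq: "(\<Prod>i\<in>A. f i (\<omega> i)) = exp (\<Sum>i\<in>I. g (\<omega> i))" for \<omega>
  proof -
    have "(\<Prod>i\<in>A. f i (\<omega> i)) = (\<Prod>i\<in>A. if i \<in> I then exp (g (\<omega> i)) else 1)"
      by (intro prod.cong) (auto simp: f_def)
    also have "\<dots> = (\<Prod>i\<in>A \<inter> I. exp (g (\<omega> i)))" by (simp add: prod.inter_restrict[OF A])
    also have "A \<inter> I = I" using I by blast
    finally show ?thesis by (simp add: exp_sum I_fin)
  qed
  have int_f: "integrable (measure_pmf p) (f i)" for i using int by (simp add: f_def)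
  show "integrable (measure_pmf (Pi_pmf A d (\<lambda>_. p))) (\<lambda>\<omega>. exp (\<Sum>i\<in>I. g (\<omega> i)))"
    using integrable_prod_Pi_pmf[of A "\<lambda>_. p" f d] A int_f by (simp add: prod_eq)
  have "measure_pmf.expectation (Pi_pmf A d (\<lambda>_. p)) (\<lambda>\<omega>. \<Prod>i\<in>A. f i (\<omega> i))
      = (\<Prod>i\<in>A. measure_pmf.expectation p (f i))"
    by (rule expectation_prod_Pi_pmf) (use A int_f in \<open>auto simp: f_def\<close>)
  also have "\<dots> = (\<Prod>i\<in>A. if i \<in> I then measure_pmf.expectation p (\<lambda>x. exp (g x)) else 1)"
    by (intro prod.cong) (auto simp: f_def)
  also have "\<dots> = (\<Prod>i\<in>A \<inter> I. measure_pmf.expectation p (\<lambda>x. exp (g x)))"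
    by (simp only: prod.inter_restrict[OF A])
  finally show "measure_pmf.expectation (Pi_pmf A d (\<lambda>_. p)) (\<lambda>\<omega>. exp (\<Sum>i\<in>I. g (\<omega> i)))
         = measure_pmf.expectation p (\<lambda>x. exp (g x)) ^ card I"
    using I by (simp add: prod_eq Int_absorb1)
qed

lemma chernoff_Pi_pmf:
  fixes p :: "'a pmf" and g :: "'a \<Rightarrow> real"
  assumes A: "finite A" and I: "I \<subseteq> A" and int: "integrable (measure_pmf p) (\<lambda>x. exp (g x))"
  shows "measure_pmf.prob (Pi_pmf A d (\<lambda>_. p)) {\<omega>. b \<le> (\<Sum>i\<in>I. g (\<omega> i))}
           \<le> measure_pmf.expectation p (\<lambda>x. exp (g x)) ^ card I / exp b"
proof -
  have "measure_pmf.prob (Pi_pmf A d (\<lambda>_. p)) {\<omega>. b \<le> (\<Sum>i\<in>I. g (\<omega> i))}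
      = measure_pmf.prob (Pi_pmf A d (\<lambda>_. p))
          {\<omega> \<in> space (measure_pmf (Pi_pmf A d (\<lambda>_. p))). exp b \<le> exp (\<Sum>i\<in>I. g (\<omega> i))}"
    by simp
  also have "\<dots> \<le> measure_pmf.expectation (Pi_pmf A d (\<lambda>_. p)) (\<lambda>\<omega>. exp (\<Sum>i\<in>I. g (\<omega> i))) / exp b"
    by (rule integral_Markov_inequality_measure[where A=UNIV])
       (use integrable_exp_sum_Pi_pmf[OF A I int] in auto)
  finally show ?thesis by (simp add: expectation_exp_sum_Pi_pmf[OF A I int])
qed

lemma exponential_tail_sum_Pi_pmf:
  fixes p :: "'a pmf" and Z :: "'a \<Rightarrow> real"
  assumes int: "integrable (measure_pmf p) Z" and bnd: "\<And>x. x \<in> set_pmf p \<Longrightarrow> Z x \<le> B"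
    and mean: "measure_pmf.expectation p Z \<le> 0" and c: "c > 0"
  shows "\<exists>a>0. \<forall>n I. I \<subseteq> {..<n} \<longrightarrow>
           measure_pmf.prob (Pi_pmf {..<n} d (\<lambda>_. p)) {\<omega>. c * real n \<le> (\<Sum>i\<in>I. Z (\<omega> i))}
             \<le> exp (- a * real n)"
proof -
  obtain \<theta> where \<theta>: "\<theta> > 0" and int_exp: "integrable (measure_pmf p) (\<lambda>x. exp (\<theta> * Z x))"
    and mgf: "measure_pmf.expectation p (\<lambda>x. exp (\<theta> * Z x)) \<le> exp (\<theta> * (c / 2))"
    using exp_moment_le_exp[OF int bnd mean, of "c / 2"] c by auto
  define \<phi> where "\<phi> = measure_pmf.expectation p (\<lambda>x. exp (\<theta> * Z x))"
  define a where "a = \<theta> * c / 2"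
  have a: "a > 0" using \<theta> c by (simp add: a_def)
  have \<phi>: "0 \<le> \<phi>" "\<phi> \<le> exp a"
    using mgf by (auto simp: \<phi>_def a_def intro!: Bochner_Integration.integral_nonneg)
  have "measure_pmf.prob (Pi_pmf {..<n} d (\<lambda>_. p)) {\<omega>. c * real n \<le> (\<Sum>i\<in>I. Z (\<omega> i))}
          \<le> exp (- a * real n)" if I: "I \<subseteq> {..<n}" for n I
  proof -
    have "card I \<le> n" using card_mono[OF _ I] by simp
    have "{\<omega>. c * real n \<le> (\<Sum>i\<in>I. Z (\<omega> i))} = {\<omega>. \<theta> * c * real n \<le> (\<Sum>i\<in>I. \<theta> * Z (\<omega> i))}"
      using \<theta> by (simp add: sum_distrib_left[symmetric] mult.assoc)
    then have "measure_pmf.prob (Pi_pmf {..<n} d (\<lambda>_. p)) {\<omega>. c * real n \<le> (\<Sum>i\<in>I. Z (\<omega> i))}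
               \<le> \<phi> ^ card I / exp (\<theta> * c * real n)"
      unfolding \<phi>_def using chernoff_Pi_pmf[OF _ I int_exp] by simp
    also have "\<phi> ^ card I \<le> exp a ^ card I" by (intro power_mono \<phi>)
    also have "exp a ^ card I \<le> exp a ^ n" using a \<open>card I \<le> n\<close> by (intro power_increasing) auto
    also have "exp a ^ n / exp (\<theta> * c * real n) = exp (- a * real n)"
      by (simp add: exp_of_nat_mult[symmetric] exp_diff[symmetric] a_def field_simps)
    finally show ?thesis by (simp add: divide_right_mono)
  qed
  with a show ?thesis by blast
qed

lemma markov_sum_Pi_pmf:
  fixes n :: nat and p :: "'a pmf" and R :: "'a \<Rightarrow> real"
  assumes int: "integrable (measure_pmf p) R" and nonneg: "\<And>x. R x \<ge> 0" and "c > 0" "n > 0"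
  shows "measure_pmf.prob (Pi_pmf {..<n} d (\<lambda>_. p)) {\<omega>. c * real n \<le> (\<Sum>i<n. R (\<omega> i))}
           \<le> measure_pmf.expectation p R / c"
proof -
  let ?P = "Pi_pmf {..<n} d (\<lambda>_. p)"
  have int_component: "integrable (measure_pmf ?P) (\<lambda>\<omega>. R (\<omega> i))"
    and expectation_component: "measure_pmf.expectation ?P (\<lambda>\<omega>. R (\<omega> i)) = measure_pmf.expectation p R"
    if "i < n" for i
    using int integral_map_pmf[of "\<lambda>\<omega>. \<omega> i" ?P R] integrable_map_pmf_eq[of "\<lambda>\<omega>. \<omega> i" ?P R]
    by (simp_all add: component_Pi_pmf_lessThan[OF that])
  have int_sum: "integrable (measure_pmf ?P) (\<lambda>\<omega>. \<Sum>i<n. R (\<omega> i))"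
    using int_component by (intro Bochner_Integration.integrable_sum) auto
  have "measure_pmf.expectation ?P (\<lambda>\<omega>. \<Sum>i<n. R (\<omega> i))
      = (\<Sum>i<n. measure_pmf.expectation ?P (\<lambda>\<omega>. R (\<omega> i)))"
    using int_component by (intro Bochner_Integration.integral_sum) auto
  also have "\<dots> = real n * measure_pmf.expectation p R"
    by (simp add: expectation_component)
  finally have expectation_sum: "measure_pmf.expectation ?P (\<lambda>\<omega>. \<Sum>i<n. R (\<omega> i))
      = real n * measure_pmf.expectation p R" .
  have "measure_pmf.prob ?P {\<omega>. c * real n \<le> (\<Sum>i<n. R (\<omega> i))}
      = measure_pmf.prob ?P {\<omega> \<in> space (measure_pmf ?P). c * real n \<le> (\<Sum>i<n. R (\<omega> i))}"
    by simp
  also have "\<dots> \<le> measure_pmf.expectation ?P (\<lambda>\<omega>. \<Sum>i<n. R (\<omega> i)) / (c * real n)"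
    by (rule integral_Markov_inequality_measure[where A=UNIV])
       (use int_sum nonneg \<open>c > 0\<close> \<open>n > 0\<close> in \<open>auto intro!: AE_I2 sum_nonneg\<close>)
  finally show ?thesis using \<open>n > 0\<close> by (simp add: expectation_sum)
qed

text \<open>Truncating at a level \<open>K\<close>: the truncated part obeys a Chernoff bound, and the excess over
  \<open>K\<close> has small mean, so Markov's inequality controls it.\<close>
lemma eventually_prob_sum_ge_less:
  fixes p :: "'a pmf" and Z :: "'a \<Rightarrow> real"
  assumes int: "integrable (measure_pmf p) Z" and mean: "measure_pmf.expectation p Z \<le> 0"
    and \<epsilon>: "\<epsilon> > 0" and \<gamma>: "\<gamma> > 0"
  shows "\<forall>\<^sub>F n in sequentially.
           measure_pmf.prob (Pi_pmf {..<n} d (\<lambda>_. p)) {\<omega>. \<epsilon> * real n \<le> (\<Sum>i<n. Z (\<omega> i))} < \<gamma>"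
proof -
  obtain K :: nat where K: "measure_pmf.expectation p (\<lambda>x. max (Z x - real K) 0) < \<epsilon> * \<gamma> / 4"
    using order_tendstoD(2)[OF tendsto_expectation_excess[OF int], of "\<epsilon> * \<gamma> / 4"] \<epsilon> \<gamma>
    by (auto simp: eventually_sequentially)
  define R where "R x = max (Z x - real K) 0" for x
  define Y where "Y x = min (Z x) (real K)" for x
  have int_R: "integrable (measure_pmf p) R"
    unfolding R_def using int by (intro integrable_max Bochner_Integration.integrable_diff) auto
  have int_Y: "integrable (measure_pmf p) Y"
    unfolding Y_def using int by (intro integrable_min) auto
  have "measure_pmf.expectation p Y \<le> measure_pmf.expectation p Z"
    using int_Y int by (intro integral_mono) (auto simp: Y_def)
  then obtain a where "a > 0" and tail: "\<forall>n I. I \<subseteq> {..<n} \<longrightarrow>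
      measure_pmf.prob (Pi_pmf {..<n} d (\<lambda>_. p)) {\<omega>. \<epsilon> / 2 * real n \<le> (\<Sum>i\<in>I. Y (\<omega> i))}
        \<le> exp (- a * real n)"
    using exponential_tail_sum_Pi_pmf[OF int_Y, of "real K" "\<epsilon> / 2" d] mean \<epsilon> by (auto simp: Y_def)
  have "\<forall>\<^sub>F n in sequentially. exp (- a * real n) < \<gamma> / 2"
    using \<open>a > 0\<close> \<gamma> by real_asymp
  then show ?thesis
    using eventually_gt_at_top[of 0]
  proof eventually_elim
    case (elim n)
    let ?P = "measure_pmf.prob (Pi_pmf {..<n} d (\<lambda>_. p))"
    let ?Y = "{\<omega>. \<epsilon> / 2 * real n \<le> (\<Sum>i<n. Y (\<omega> i))}"
    let ?R = "{\<omega>. \<epsilon> / 2 * real n \<le> (\<Sum>i<n. R (\<omega> i))}"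
    have "{\<omega>. \<epsilon> * real n \<le> (\<Sum>i<n. Z (\<omega> i))} \<subseteq> ?Y \<union> ?R"
    proof
      fix \<omega> assume "\<omega> \<in> {\<omega>. \<epsilon> * real n \<le> (\<Sum>i<n. Z (\<omega> i))}"
      moreover have "(\<Sum>i<n. Z (\<omega> i)) = (\<Sum>i<n. Y (\<omega> i)) + (\<Sum>i<n. R (\<omega> i))"
        unfolding sum.distrib[symmetric] by (intro sum.cong) (auto simp: Y_def R_def)
      ultimately show "\<omega> \<in> ?Y \<union> ?R" by auto
    qed
    then have "?P {\<omega>. \<epsilon> * real n \<le> (\<Sum>i<n. Z (\<omega> i))} \<le> ?P ?Y + ?P ?R"
      by (intro order.trans[OF measure_pmf.finite_measure_mono measure_Un_le]) auto
    also have "?P ?R \<le> measure_pmf.expectation p R / (\<epsilon> / 2)"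
      using markov_sum_Pi_pmf[OF int_R, of "\<epsilon> / 2" n d] \<epsilon> elim by (auto simp: R_def)
    also have "\<dots> < \<gamma> / 2" using K \<epsilon> by (simp add: R_def[abs_def] field_simps)
    finally show ?case using tail[rule_format, OF order.refl, of n] elim by linarith
  qed
qed

lemma weak_law_Pi_pmf:
  fixes p :: "'a pmf" and Z :: "'a \<Rightarrow> real"
  assumes int: "integrable (measure_pmf p) Z" and mean: "measure_pmf.expectation p Z = 0"
    and \<epsilon>: "\<epsilon> > 0"
  shows "(\<lambda>n. measure_pmf.prob (Pi_pmf {..<n} d (\<lambda>_. p))
            {\<omega>. \<epsilon> * real n < \<bar>\<Sum>i<n. Z (\<omega> i)\<bar>}) \<longlonglongrightarrow> 0"
proof (rule order_tendstoI)
  show "\<forall>\<^sub>F n in sequentially. \<gamma> < measure_pmf.prob (Pi_pmf {..<n} d (\<lambda>_. p))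
            {\<omega>. \<epsilon> * real n < \<bar>\<Sum>i<n. Z (\<omega> i)\<bar>}" if "\<gamma> < 0" for \<gamma>
    using that by (intro always_eventually allI) (auto intro: less_le_trans)
next
  fix \<gamma> :: real assume "\<gamma> > 0"
  have mean_le: "measure_pmf.expectation p Z \<le> 0" using mean by simp
  have int_neg: "integrable (measure_pmf p) (\<lambda>x. - Z x)"
    and mean_neg: "measure_pmf.expectation p (\<lambda>x. - Z x) \<le> 0"
    using int mean by auto
  have "\<forall>\<^sub>F n in sequentially. measure_pmf.prob (Pi_pmf {..<n} d (\<lambda>_. p))
          {\<omega>. \<epsilon> * real n \<le> (\<Sum>i<n. Z (\<omega> i))} < \<gamma> / 2"
    using eventually_prob_sum_ge_less[OF int mean_le \<epsilon>, of "\<gamma> / 2" d] \<open>\<gamma> > 0\<close> by simp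
  moreover have "\<forall>\<^sub>F n in sequentially. measure_pmf.prob (Pi_pmf {..<n} d (\<lambda>_. p))
          {\<omega>. \<epsilon> * real n \<le> (\<Sum>i<n. - Z (\<omega> i))} < \<gamma> / 2"
    using eventually_prob_sum_ge_less[OF int_neg mean_neg \<epsilon>, of "\<gamma> / 2" d] \<open>\<gamma> > 0\<close> by simp
  ultimately show "\<forall>\<^sub>F n in sequentially. measure_pmf.prob (Pi_pmf {..<n} d (\<lambda>_. p))
            {\<omega>. \<epsilon> * real n < \<bar>\<Sum>i<n. Z (\<omega> i)\<bar>} < \<gamma>"
  proof eventually_elim
    case (elim n)
    let ?P = "measure_pmf.prob (Pi_pmf {..<n} d (\<lambda>_. p))"
    have "{\<omega>. \<epsilon> * real n < \<bar>\<Sum>i<n. Z (\<omega> i)\<bar>}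
            \<subseteq> {\<omega>. \<epsilon> * real n \<le> (\<Sum>i<n. Z (\<omega> i))} \<union> {\<omega>. \<epsilon> * real n \<le> (\<Sum>i<n. - Z (\<omega> i))}"
      by (auto simp: sum_negf)
    then have "?P {\<omega>. \<epsilon> * real n < \<bar>\<Sum>i<n. Z (\<omega> i)\<bar>}
        \<le> ?P {\<omega>. \<epsilon> * real n \<le> (\<Sum>i<n. Z (\<omega> i))} + ?P {\<omega>. \<epsilon> * real n \<le> (\<Sum>i<n. - Z (\<omega> i))}"
      by (intro order.trans[OF measure_pmf.finite_measure_mono measure_Un_le]) auto
    with elim show ?case by linarith
  qed
qed

section \<open>Integer random walks\<close>

definition walk_pmf :: "int pmf \<Rightarrow> nat \<Rightarrow> int pmf" where
  "walk_pmf p n = map_pmf (\<lambda>\<omega>. walk \<omega> n) (Pi_pmf {..<n} 0 (\<lambda>_. p))"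

lemma walk_pmf_0 [simp]: "walk_pmf p 0 = return_pmf 0"
  by (simp add: walk_pmf_def walk_def)

lemma walk_pmf_Suc: "walk_pmf p (Suc n) = map_pmf (\<lambda>(s, x). s + x) (pair_pmf (walk_pmf p n) p)"
proof -
  have "Pi_pmf {..<Suc n} 0 (\<lambda>_. p)
          = map_pmf (\<lambda>(y, f). f(n := y)) (pair_pmf p (Pi_pmf {..<n} 0 (\<lambda>_. p)))"
    using Pi_pmf_insert[of "{..<n}" n 0 "\<lambda>_. p"] by (simp add: lessThan_Suc)
  moreover have "walk (f(n := y)) (Suc n) = walk f n + y" for f y
    by (simp add: walk_def)
  ultimately have "walk_pmf p (Suc n) = map_pmf (\<lambda>(y, s). s + y)
      (map_pmf (\<lambda>(y, f). (id y, walk f n)) (pair_pmf p (Pi_pmf {..<n} 0 (\<lambda>_. p))))"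
    by (simp add: walk_pmf_def pmf.map_comp o_def case_prod_unfold)
  also have "\<dots> = map_pmf (\<lambda>(y, s). s + y) (pair_pmf p (walk_pmf p n))"
    by (subst map_pair) (simp add: walk_pmf_def)
  also have "\<dots> = map_pmf (\<lambda>(s, x). s + x) (pair_pmf (walk_pmf p n) p)"
    by (subst pair_commute_pmf) (simp add: pmf.map_comp o_def case_prod_unfold)
  finally show ?thesis .
qed

lemma walk_pmf_1 [simp]: "walk_pmf p (Suc 0) = p"
  using walk_pmf_Suc[of p 0] by (simp add: pair_return_pmf1 pmf.map_comp o_def)

lemma walk_pmf_add:
  "walk_pmf p (a + b) = map_pmf (\<lambda>(s, t). s + t) (pair_pmf (walk_pmf p a) (walk_pmf p b))"
proof (induction b)
  case 0
  then show ?case by (simp add: pair_return_pmf2 pmf.map_comp o_def)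
next
  case (Suc b)
  then show ?case
    unfolding add_Suc_right walk_pmf_Suc
    by (simp add: pair_pmf_def map_pmf_def bind_assoc_pmf bind_return_pmf add.assoc)
qed

lemma pmf_walk_pmf_add_ge: "pmf (walk_pmf p a) x * pmf (walk_pmf p b) y \<le> pmf (walk_pmf p (a + b)) (x + y)"
proof -
  have "pmf (walk_pmf p a) x * pmf (walk_pmf p b) y
      = measure_pmf.prob (pair_pmf (walk_pmf p a) (walk_pmf p b)) {(x, y)}"
    by (simp add: measure_pmf_single pmf_pair)
  also have "\<dots> \<le> measure_pmf.prob (pair_pmf (walk_pmf p a) (walk_pmf p b)) ((\<lambda>(s, t). s + t) -` {x + y})"
    by (intro measure_pmf.finite_measure_mono) auto
  also have "\<dots> = pmf (walk_pmf p (a + b)) (x + y)"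
    by (simp add: walk_pmf_add pmf_map)
  finally show ?thesis .
qed

lemma pmf_walk_pmf_mult_ge:
  assumes "r \<le> pmf (walk_pmf p a) x" and "r \<ge> 0"
  shows "r ^ k \<le> pmf (walk_pmf p (k * a)) (int k * x)"
proof (induction k)
  case (Suc k)
  have "r ^ Suc k \<le> pmf (walk_pmf p a) x * pmf (walk_pmf p (k * a)) (int k * x)"
    using assms Suc by (simp add: mult_mono)
  also have "\<dots> \<le> pmf (walk_pmf p (a + k * a)) (x + int k * x)" by (rule pmf_walk_pmf_add_ge)
  finally show ?case by (simp add: algebra_simps)
qed simp

text \<open>A walk with steps \<open>-1\<close> and \<open>u\<close> descends by \<open>j \<ge> 0\<close> in \<open>j\<close> steps and climbs by one
  in \<open>u\<close> steps (one step \<open>u\<close>, then \<open>u - 1\<close> steps \<open>-1\<close>).\<close>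
lemma walk_pmf_reach_ge:
  assumes down: "\<beta> \<le> pmf p (-1)" and up: "\<beta> \<le> pmf p (int u)" and "u \<ge> 1" and "\<beta> \<ge> 0"
  shows "\<exists>L \<le> u * nat \<bar>j\<bar>. \<beta> ^ L \<le> pmf (walk_pmf p L) (- j)"
proof -
  have descend: "\<beta> ^ k \<le> pmf (walk_pmf p k) (- int k)" for k
    using pmf_walk_pmf_mult_ge[of \<beta> p "Suc 0" "-1" k] down \<open>\<beta> \<ge> 0\<close> by simp
  show ?thesis
  proof (cases "j \<ge> 0")
    case True
    then show ?thesis using descend[of "nat j"] \<open>u \<ge> 1\<close> by (intro exI[of _ "nat j"]) auto
  next
    case False
    have "\<beta> ^ u = \<beta> * \<beta> ^ (u - 1)" using \<open>u \<ge> 1\<close> by (simp flip: power_Suc)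
    also have "\<dots> \<le> pmf (walk_pmf p 1) (int u) * pmf (walk_pmf p (u - 1)) (- int (u - 1))"
      using up descend[of "u - 1"] \<open>\<beta> \<ge> 0\<close> by (intro mult_mono) (auto simp: walk_pmf_1)
    also have "\<dots> \<le> pmf (walk_pmf p (1 + (u - 1))) (int u + - int (u - 1))"
      by (rule pmf_walk_pmf_add_ge)
    also have "\<dots> = pmf (walk_pmf p u) 1" using \<open>u \<ge> 1\<close> by (simp add: of_nat_diff)
    finally have climb: "\<beta> ^ u \<le> pmf (walk_pmf p u) 1" .
    have "(\<beta> ^ u) ^ nat (- j) \<le> pmf (walk_pmf p (nat (- j) * u)) (int (nat (- j)) * 1)"
      by (rule pmf_walk_pmf_mult_ge[OF climb]) (use \<open>\<beta> \<ge> 0\<close> in auto)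
    with False show ?thesis
      by (intro exI[of _ "nat (- j) * u"]) (simp add: power_mult[symmetric] mult.commute)
  qed
qed

lemma exists_pmf_ge_in_interval:
  fixes q :: "int pmf" and J :: int
  assumes half: "measure_pmf.prob q {-J..J} \<ge> 1 / 2"
  shows "\<exists>j. \<bar>j\<bar> \<le> J \<and> 1 / (2 * (2 * real_of_int J + 1)) \<le> pmf q j"
proof (rule ccontr)
  assume none: "\<not> ?thesis"
  have small: "pmf q j < 1 / (2 * (2 * real_of_int J + 1))" if "j \<in> {-J..J}" for j
  proof -
    from that have "\<bar>j\<bar> \<le> J" by (simp add: abs_le_iff)
    then show ?thesis using none not_le by blast
  qed
  have "J \<ge> 0" using half by (cases "J \<ge> 0") auto
  have "measure_pmf.prob q {-J..J} = (\<Sum>j\<in>{-J..J}. pmf q j)"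
    by (simp add: measure_measure_pmf_finite)
  also have "\<dots> < (\<Sum>j\<in>{-J..J}. 1 / (2 * (2 * real_of_int J + 1)))"
    using small \<open>J \<ge> 0\<close> by (intro sum_strict_mono) auto
  also have "\<dots> = 1 / 2" using \<open>J \<ge> 0\<close> by (simp add: field_simps)
  finally show False using half by simp
qed

lemma abs_of_int_le_iff_mem_floor:
  fixes z :: int and x :: real
  shows "\<bar>real_of_int z\<bar> \<le> x \<longleftrightarrow> z \<in> {-\<lfloor>x\<rfloor>..\<lfloor>x\<rfloor>}"
proof -
  have "\<bar>real_of_int z\<bar> \<le> x \<longleftrightarrow> real_of_int z \<le> x \<and> - real_of_int z \<le> x" by (simp only: abs_le_iff)
  also have "\<dots> \<longleftrightarrow> z \<le> \<lfloor>x\<rfloor> \<and> - z \<le> \<lfloor>x\<rfloor>" by (simp only: le_floor_iff of_int_minus)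
  also have "\<dots> \<longleftrightarrow> z \<in> {-\<lfloor>x\<rfloor>..\<lfloor>x\<rfloor>}" by (simp only: atLeastAtMost_iff) linarith
  finally show ?thesis .
qed

lemma eventually_walk_pmf_concentrated:
  fixes p :: "int pmf"
  assumes int: "integrable (measure_pmf p) real_of_int" and mean: "measure_pmf.expectation p real_of_int = 0"
    and \<epsilon>: "\<epsilon> > 0"
  shows "\<forall>\<^sub>F m in sequentially. \<exists>j. \<bar>real_of_int j\<bar> \<le> \<epsilon> * real m \<and>
           1 / (2 * (2 * \<epsilon> * real m + 1)) \<le> pmf (walk_pmf p m) j"
proof -
  have "(\<lambda>m. measure_pmf.prob (Pi_pmf {..<m} 0 (\<lambda>_. p))
          {\<omega>. \<epsilon> * real m < \<bar>\<Sum>i<m. real_of_int (\<omega> i)\<bar>}) \<longlonglongrightarrow> 0"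
    using weak_law_Pi_pmf[OF int mean \<epsilon>, of 0] by simp
  then have "\<forall>\<^sub>F m in sequentially. measure_pmf.prob (Pi_pmf {..<m} 0 (\<lambda>_. p))
          {\<omega>. \<epsilon> * real m < \<bar>\<Sum>i<m. real_of_int (\<omega> i)\<bar>} < 1 / 2"
    by (rule order_tendstoD(2)) simp
  then show ?thesis
  proof eventually_elim
    case (elim m)
    define J where "J = \<lfloor>\<epsilon> * real m\<rfloor>"
    have J: "z \<in> {-J..J} \<longleftrightarrow> \<bar>real_of_int z\<bar> \<le> \<epsilon> * real m" for z
      unfolding J_def by (rule abs_of_int_le_iff_mem_floor[symmetric])
    have "(\<lambda>\<omega>. walk \<omega> m) -` {-J..J} = UNIV - {\<omega>. \<epsilon> * real m < \<bar>\<Sum>i<m. real_of_int (\<omega> i)\<bar>}"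
    proof (intro set_eqI)
      fix \<omega>
      show "\<omega> \<in> (\<lambda>\<omega>. walk \<omega> m) -` {-J..J} \<longleftrightarrow>
            \<omega> \<in> UNIV - {\<omega>. \<epsilon> * real m < \<bar>\<Sum>i<m. real_of_int (\<omega> i)\<bar>}"
        using J[of "walk \<omega> m"] by (simp only: vimage_eq Diff_iff mem_Collect_eq walk_def of_int_sum) auto
    qed
    then have "measure_pmf.prob (walk_pmf p m) {-J..J}
        = 1 - measure_pmf.prob (Pi_pmf {..<m} 0 (\<lambda>_. p)) {\<omega>. \<epsilon> * real m < \<bar>\<Sum>i<m. real_of_int (\<omega> i)\<bar>}"
      using measure_pmf.prob_compl[of "{\<omega>. \<epsilon> * real m < \<bar>\<Sum>i<m. real_of_int (\<omega> i)\<bar>}"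
          "Pi_pmf {..<m} 0 (\<lambda>_. p)"]
      by (simp add: walk_pmf_def)
    with elim have "measure_pmf.prob (walk_pmf p m) {-J..J} \<ge> 1 / 2" by simp
    then obtain j where j: "\<bar>j\<bar> \<le> J" and pj: "1 / (2 * (2 * real_of_int J + 1)) \<le> pmf (walk_pmf p m) j"
      using exists_pmf_ge_in_interval by blast
    have "0 \<le> J" using j by linarith
    moreover have "real_of_int J \<le> \<epsilon> * real m" by (simp add: J_def)
    ultimately have "1 / (2 * (2 * \<epsilon> * real m + 1)) \<le> 1 / (2 * (2 * real_of_int J + 1))"
      using \<open>\<epsilon> > 0\<close> by (intro divide_left_mono mult_pos_pos) auto
    then have "1 / (2 * (2 * \<epsilon> * real m + 1)) \<le> pmf (walk_pmf p m) j"
      using pj by (rule order_trans)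
    moreover have "\<bar>real_of_int j\<bar> \<le> \<epsilon> * real m" using J[of j] j by (simp add: abs_le_iff)
    ultimately show ?case by blast
  qed
qed

lemma walk_pmf_reach_cheaply:
  assumes down: "pmf p (-1) > 0" and up: "pmf p (int u) > 0" and "u \<ge> 1" and \<eta>: "\<eta> > 0"
  shows "\<exists>\<epsilon>>0. \<forall>m j. \<bar>real_of_int j\<bar> \<le> \<epsilon> * real m \<longrightarrow>
           (\<exists>L. exp (- \<eta> * real m) \<le> pmf (walk_pmf p L) (- j))"
proof -
  define \<beta> where "\<beta> = min (pmf p (-1)) (pmf p (int u))"
  have "0 < \<beta>" "\<beta> \<le> 1" using down up pmf_le_1[of p "-1"] by (auto simp: \<beta>_def)
  define \<kappa> where "\<kappa> = - ln \<beta>"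
  have "\<kappa> \<ge> 0" using \<open>0 < \<beta>\<close> \<open>\<beta> \<le> 1\<close> by (simp add: \<kappa>_def)
  define \<epsilon> where "\<epsilon> = \<eta> / (real u * \<kappa> + 1)"
  have "\<epsilon> > 0" using \<eta> \<open>\<kappa> \<ge> 0\<close> by (simp add: \<epsilon>_def add_nonneg_pos)
  have cost: "real u * \<kappa> * \<epsilon> \<le> \<eta>"
  proof -
    have "real u * \<kappa> * \<epsilon> = \<eta> * (real u * \<kappa> / (real u * \<kappa> + 1))"
      using \<open>\<kappa> \<ge> 0\<close> by (simp add: \<epsilon>_def field_simps add_nonneg_pos)
    also have "\<dots> \<le> \<eta>" using \<eta> \<open>\<kappa> \<ge> 0\<close> by (simp add: mult_left_le divide_le_eq add_nonneg_pos)
    finally show ?thesis .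
  qed
  have "\<exists>L. exp (- \<eta> * real m) \<le> pmf (walk_pmf p L) (- j)" if j: "\<bar>real_of_int j\<bar> \<le> \<epsilon> * real m" for m j
  proof -
    obtain L where "L \<le> u * nat \<bar>j\<bar>" and reach: "\<beta> ^ L \<le> pmf (walk_pmf p L) (- j)"
      using walk_pmf_reach_ge[of \<beta> p u j] \<open>u \<ge> 1\<close> \<open>0 < \<beta>\<close> by (auto simp: \<beta>_def)
    have "real L \<le> real (u * nat \<bar>j\<bar>)" using \<open>L \<le> u * nat \<bar>j\<bar>\<close> by (simp only: of_nat_le_iff)
    also have "\<dots> = real u * \<bar>real_of_int j\<bar>" by simp
    also have "\<dots> \<le> real u * (\<epsilon> * real m)" using j by (intro mult_left_mono) auto
    finally have "\<kappa> * real L \<le> \<kappa> * (real u * (\<epsilon> * real m))"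
      using \<open>\<kappa> \<ge> 0\<close> by (intro mult_left_mono)
    also have "\<dots> = real u * \<kappa> * \<epsilon> * real m" by (simp only: mult_ac)
    also have "\<dots> \<le> \<eta> * real m" using cost by (intro mult_right_mono) auto
    finally have "exp (- \<eta> * real m) \<le> exp (- (\<kappa> * real L))" by simp
    also have "\<dots> = \<beta> ^ L"
    proof -
      have "\<beta> ^ L = exp (ln \<beta>) ^ L" using \<open>0 < \<beta>\<close> by simp
      also have "\<dots> = exp (real L * ln \<beta>)" by (rule exp_of_nat_mult[symmetric])
      finally show ?thesis by (simp add: \<kappa>_def)
    qed
    finally have "exp (- \<eta> * real m) \<le> \<beta> ^ L" .
    then show ?thesis using reach by (intro exI[of _ L]) (rule order.trans)
  qed
  with \<open>\<epsilon> > 0\<close> show ?thesis by blast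
qed

text \<open>By the weak law some value \<open>j\<close> with \<open>|j| \<le> \<epsilon> m\<close> has probability at least of order
  \<open>1 / (\<epsilon> m)\<close> at time \<open>m\<close>, and from there the walk returns to \<open>0\<close> cheaply.\<close>
lemma walk_pmf_return_ge:
  fixes p :: "int pmf"
  assumes int: "integrable (measure_pmf p) real_of_int" and mean: "measure_pmf.expectation p real_of_int = 0"
    and down: "pmf p (-1) > 0" and up: "pmf p (int u) > 0" and "u \<ge> 1" and \<eta>: "\<eta> > 0"
  shows "\<exists>m\<ge>1. exp (- \<eta> * real m) \<le> pmf (walk_pmf p m) 0"
proof -
  obtain \<epsilon> where "\<epsilon> > 0" and reach: "\<And>m j. \<bar>real_of_int j\<bar> \<le> \<epsilon> * real m \<Longrightarrow>
      \<exists>L. exp (- (\<eta> / 2) * real m) \<le> pmf (walk_pmf p L) (- j)"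
    using walk_pmf_reach_cheaply[OF down up \<open>u \<ge> 1\<close>, of "\<eta> / 2"] \<eta> by auto
  have "\<forall>\<^sub>F m in sequentially. 2 * (2 * \<epsilon> * real m + 1) \<le> exp (\<eta> / 2 * real m)"
    using \<open>\<epsilon> > 0\<close> \<eta> by real_asymp
  then obtain m j where "m > 0" and j: "\<bar>real_of_int j\<bar> \<le> \<epsilon> * real m"
    and pj: "1 / (2 * (2 * \<epsilon> * real m + 1)) \<le> pmf (walk_pmf p m) j"
    and big: "2 * (2 * \<epsilon> * real m + 1) \<le> exp (\<eta> / 2 * real m)"
    using eventually_conj[OF eventually_walk_pmf_concentrated[OF int mean \<open>\<epsilon> > 0\<close>]
        eventually_conj[OF _ eventually_gt_at_top[of 0]]]
    unfolding eventually_sequentially by blast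
  have "exp (- (\<eta> / 2) * real m) = 1 / exp (\<eta> / 2 * real m)"
    by (simp add: exp_minus inverse_eq_divide)
  also have "\<dots> \<le> 1 / (2 * (2 * \<epsilon> * real m + 1))"
    using big \<open>\<epsilon> > 0\<close> by (intro divide_left_mono mult_pos_pos add_nonneg_pos mult_nonneg_nonneg) auto
  finally have first: "exp (- (\<eta> / 2) * real m) \<le> pmf (walk_pmf p m) j" using pj by linarith
  obtain L where second: "exp (- (\<eta> / 2) * real m) \<le> pmf (walk_pmf p L) (- j)"
    using reach[OF j] by blast
  have "exp (- \<eta> * real (m + L)) \<le> exp (- \<eta> * real m)"
    using \<eta> by (simp add: mult_le_cancel_left_pos)
  also have "\<dots> = exp (- (\<eta> / 2) * real m) * exp (- (\<eta> / 2) * real m)"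
    by (simp flip: exp_add)
  also have "\<dots> \<le> pmf (walk_pmf p m) j * pmf (walk_pmf p L) (- j)"
    using first second by (intro mult_mono) auto
  also have "\<dots> \<le> pmf (walk_pmf p (m + L)) 0"
    using pmf_walk_pmf_add_ge[of p m j L "- j"] by simp
  finally show ?thesis using \<open>m > 0\<close> by (intro exI[of _ "m + L"]) auto
qed

lemma exists_lower_bound_on_residue_classes:
  fixes f :: "nat \<Rightarrow> real" and m :: nat
  assumes "m \<ge> 1"
  shows "\<exists>C>0. \<forall>n. f n > 0 \<longrightarrow> (\<exists>r\<le>n. r mod m = n mod m \<and> C \<le> f r)"
proof -
  define first where "first j = (LEAST r. f r > 0 \<and> r mod m = j)" for j
  define Js where "Js = {j. j < m \<and> (\<exists>r. f r > 0 \<and> r mod m = j)}"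
  have first: "f (first j) > 0 \<and> first j mod m = j" if j: "j \<in> Js" for j
  proof -
    obtain r where "f r > 0 \<and> r mod m = j" using j unfolding Js_def by blast
    then show ?thesis unfolding first_def by (rule LeastI)
  qed
  define C where "C = Min (insert 1 ((\<lambda>j. f (first j)) ` Js))"
  have "finite Js" by (simp add: Js_def)
  then have "C > 0" using first by (simp add: C_def)
  moreover have "\<exists>r\<le>n. r mod m = n mod m \<and> C \<le> f r" if "f n > 0" for n
  proof (intro exI conjI)
    have "n mod m \<in> Js" using that \<open>m \<ge> 1\<close> by (auto simp: Js_def)
    then show "first (n mod m) mod m = n mod m" and "C \<le> f (first (n mod m))"
      using first \<open>finite Js\<close> by (auto simp: C_def)
    show "first (n mod m) \<le> n" using that by (auto simp: first_def intro: Least_le)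
  qed
  ultimately show ?thesis by blast
qed

text \<open>Along each residue class modulo the length \<open>m\<close> of a cheap return to the origin, the
  earliest visit to \<open>x\<close> followed by repeated returns costs only a constant factor.\<close>
lemma walk_pmf_eventually_ge_exp:
  assumes return: "\<And>\<eta>. \<eta> > 0 \<Longrightarrow> \<exists>m\<ge>1. exp (- \<eta> * real m) \<le> pmf (walk_pmf p m) 0"
    and \<eta>: "\<eta> > 0"
  shows "\<exists>N. \<forall>n\<ge>N. pmf (walk_pmf p n) x > 0 \<longrightarrow> exp (- \<eta> * real n) \<le> pmf (walk_pmf p n) x"
proof -
  obtain m where "m \<ge> 1" and m: "exp (- (\<eta> / 2) * real m) \<le> pmf (walk_pmf p m) 0"
    using return[of "\<eta> / 2"] \<eta> by auto
  obtain C where "C > 0" and C: "\<And>n. pmf (walk_pmf p n) x > 0 \<Longrightarrow>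
      \<exists>r\<le>n. r mod m = n mod m \<and> C \<le> pmf (walk_pmf p r) x"
    using exists_lower_bound_on_residue_classes[OF \<open>m \<ge> 1\<close>, of "\<lambda>n. pmf (walk_pmf p n) x"] by blast
  have "(\<lambda>n. exp (- (\<eta> / 2) * real n)) \<longlonglongrightarrow> 0" using \<eta> by real_asymp
  then have "\<forall>\<^sub>F n in sequentially. exp (- (\<eta> / 2) * real n) < C"
    using \<open>C > 0\<close> by (intro order_tendstoD(2)) auto
  then obtain N where N: "\<And>n. n \<ge> N \<Longrightarrow> exp (- (\<eta> / 2) * real n) < C"
    by (auto simp: eventually_sequentially)
  have "exp (- \<eta> * real n) \<le> pmf (walk_pmf p n) x" if "n \<ge> N" and pos: "pmf (walk_pmf p n) x > 0" for n
  proof -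
    obtain r where "r \<le> n" "r mod m = n mod m" and r: "C \<le> pmf (walk_pmf p r) x"
      using C[OF pos] by blast
    then have "m dvd n - r" using mod_eq_dvd_iff_nat[of r n m] by simp
    then obtain k where "n - r = m * k" by (elim dvdE)
    then have n: "n = k * m + r" using \<open>r \<le> n\<close> by (simp add: algebra_simps)
    have "exp (- (\<eta> / 2) * real n) \<le> exp (- (\<eta> / 2) * real m) ^ k"
      using \<eta> n by (simp add: exp_of_nat_mult[symmetric])
    also have "\<dots> \<le> pmf (walk_pmf p (k * m)) 0"
      using pmf_walk_pmf_mult_ge[OF m, of k] by simp
    finally have returns: "exp (- (\<eta> / 2) * real n) \<le> pmf (walk_pmf p (k * m)) 0" .
    have "exp (- \<eta> * real n) = exp (- (\<eta> / 2) * real n) * exp (- (\<eta> / 2) * real n)"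
      by (simp flip: exp_add)
    also have "\<dots> \<le> pmf (walk_pmf p (k * m)) 0 * pmf (walk_pmf p r) x"
      using returns r N[OF that(1)] by (intro mult_mono) auto
    also have "\<dots> \<le> pmf (walk_pmf p n) x"
      using pmf_walk_pmf_add_ge[of p "k * m" 0 r x] n by simp
    finally show ?thesis .
  qed
  then show ?thesis by blast
qed

lemma walk_far_and_ends_nonpos_cases:
  fixes \<omega> :: "nat \<Rightarrow> int"
  assumes far: "x \<le> real_of_int (Max ((\<lambda>m. \<bar>walk \<omega> m\<bar>) ` {0..n}))" and "walk \<omega> n \<le> 0"
  shows "\<exists>m\<le>n. x \<le> (\<Sum>i<m. - real_of_int (\<omega> i)) \<or> x \<le> (\<Sum>i\<in>{m..<n}. - real_of_int (\<omega> i))"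
proof -
  have "Max ((\<lambda>m. \<bar>walk \<omega> m\<bar>) ` {0..n}) \<in> (\<lambda>m. \<bar>walk \<omega> m\<bar>) ` {0..n}"
    by (intro Max_in) auto
  then obtain m where "m \<in> {0..n}" and max: "Max ((\<lambda>m. \<bar>walk \<omega> m\<bar>) ` {0..n}) = \<bar>walk \<omega> m\<bar>"
    by blast
  then have "m \<le> n" by simp
  from far max have "x \<le> \<bar>real_of_int (walk \<omega> m)\<bar>" by simp
  moreover have "(\<Sum>i<m. - real_of_int (\<omega> i)) = - real_of_int (walk \<omega> m)"
    by (simp add: walk_def sum_negf)
  moreover have "(\<Sum>i\<in>{m..<n}. - real_of_int (\<omega> i)) = real_of_int (walk \<omega> m) - real_of_int (walk \<omega> n)"
  proof -
    have "walk \<omega> n = walk \<omega> m + sum \<omega> {m..<n}"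
      using \<open>m \<le> n\<close> by (simp add: walk_def lessThan_atLeast0 sum.atLeastLessThan_concat)
    then show ?thesis by (simp add: sum_negf flip: of_int_sum)
  qed
  ultimately show ?thesis using \<open>m \<le> n\<close> \<open>walk \<omega> n \<le> 0\<close>
    by (intro exI[of _ m]) (auto simp: abs_if split: if_splits)
qed

lemma prob_walk_far_and_ends_nonpos:
  fixes p :: "int pmf"
  assumes int: "integrable (measure_pmf p) real_of_int" and mean: "measure_pmf.expectation p real_of_int \<ge> 0"
    and bnd: "\<And>x. x \<in> set_pmf p \<Longrightarrow> B \<le> x" and \<epsilon>: "\<epsilon> > 0"
  shows "\<exists>a>0. \<forall>n. measure_pmf.prob (Pi_pmf {..<n} 0 (\<lambda>_. p))
           {\<omega>. real_of_int (Max ((\<lambda>m. \<bar>walk \<omega> m\<bar>) ` {0..n})) \<ge> \<epsilon> * real n \<and> walk \<omega> n \<le> 0}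
           \<le> 2 * (real n + 1) * exp (- a * real n)"
proof -
  have "integrable (measure_pmf p) (\<lambda>x. - real_of_int x)"
    and "measure_pmf.expectation p (\<lambda>x. - real_of_int x) \<le> 0"
    and "\<And>x. x \<in> set_pmf p \<Longrightarrow> - real_of_int x \<le> - real_of_int B"
    using int mean bnd by auto
  then obtain a where "a > 0" and tail: "\<forall>n I. I \<subseteq> {..<n} \<longrightarrow> measure_pmf.prob (Pi_pmf {..<n} 0 (\<lambda>_. p))
      {\<omega>. \<epsilon> * real n \<le> (\<Sum>i\<in>I. - real_of_int (\<omega> i))} \<le> exp (- a * real n)"
    using exponential_tail_sum_Pi_pmf[of p "\<lambda>x. - real_of_int x" "- real_of_int B" \<epsilon> 0] \<epsilon>
    by blast
  have "measure_pmf.prob (Pi_pmf {..<n} 0 (\<lambda>_. p))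
           {\<omega>. real_of_int (Max ((\<lambda>m. \<bar>walk \<omega> m\<bar>) ` {0..n})) \<ge> \<epsilon> * real n \<and> walk \<omega> n \<le> 0}
           \<le> 2 * (real n + 1) * exp (- a * real n)" for n
  proof -
    let ?P = "measure_pmf.prob (Pi_pmf {..<n} 0 (\<lambda>_. p))"
    define E where "E I = {\<omega>. \<epsilon> * real n \<le> (\<Sum>i\<in>I. - real_of_int (\<omega> i))}" for I :: "nat set"
    have "{\<omega>. real_of_int (Max ((\<lambda>m. \<bar>walk \<omega> m\<bar>) ` {0..n})) \<ge> \<epsilon> * real n \<and> walk \<omega> n \<le> 0}
            \<subseteq> (\<Union>m\<in>{0..n}. E {..<m} \<union> E {m..<n})"
    proof
      fix \<omega> assume "\<omega> \<in> {\<omega>. real_of_int (Max ((\<lambda>m. \<bar>walk \<omega> m\<bar>) ` {0..n})) \<ge> \<epsilon> * real n \<and> walk \<omega> n \<le> 0}"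
      then obtain m where "m \<le> n" and "\<epsilon> * real n \<le> (\<Sum>i<m. - real_of_int (\<omega> i)) \<or>
          \<epsilon> * real n \<le> (\<Sum>i\<in>{m..<n}. - real_of_int (\<omega> i))"
        using walk_far_and_ends_nonpos_cases[of "\<epsilon> * real n" \<omega> n] by auto
      then show "\<omega> \<in> (\<Union>m\<in>{0..n}. E {..<m} \<union> E {m..<n})" by (auto simp: E_def intro!: bexI[of _ m])
    qed
    then have "?P {\<omega>. real_of_int (Max ((\<lambda>m. \<bar>walk \<omega> m\<bar>) ` {0..n})) \<ge> \<epsilon> * real n \<and> walk \<omega> n \<le> 0}
               \<le> ?P (\<Union>m\<in>{0..n}. E {..<m} \<union> E {m..<n})"
      by (intro measure_pmf.finite_measure_mono) auto
    also have "\<dots> \<le> (\<Sum>m\<in>{0..n}. ?P (E {..<m} \<union> E {m..<n}))"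
      by (intro measure_UNION_le) auto
    also have "\<dots> \<le> (\<Sum>m\<in>{0..n}. ?P (E {..<m}) + ?P (E {m..<n}))"
      by (intro sum_mono measure_Un_le) auto
    also have "\<dots> \<le> (\<Sum>m\<in>{0..n}. exp (- a * real n) + exp (- a * real n))"
      unfolding E_def by (intro sum_mono add_mono tail[rule_format]) auto
    also have "\<dots> = 2 * (real n + 1) * exp (- a * real n)" by simp
    finally show ?thesis .
  qed
  with \<open>a > 0\<close> show ?thesis by blast
qed

section \<open>Steps drawn from a critical offspring distribution\<close>

lemma critical_offspring_integrable:
  assumes "critical_offspring \<mu>"
  shows "integrable (measure_pmf \<mu>) real"
  using assms not_integrable_integral_eq[of "measure_pmf \<mu>" real]
  unfolding critical_offspring_def by fastforce

lemma integrable_step_pmf: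
  assumes "critical_offspring \<mu>"
  shows "integrable (measure_pmf (step_pmf \<mu>)) real_of_int"
  using critical_offspring_integrable[OF assms] unfolding step_pmf_def by (simp add: of_nat_diff)

lemma expectation_step_pmf:
  assumes "critical_offspring \<mu>"
  shows "measure_pmf.expectation (step_pmf \<mu>) real_of_int = 0"
proof -
  have "measure_pmf.expectation (step_pmf \<mu>) real_of_int = measure_pmf.expectation \<mu> (\<lambda>k. real k - 1)"
    unfolding step_pmf_def by simp
  also have "\<dots> = measure_pmf.expectation \<mu> real - 1"
    using critical_offspring_integrable[OF assms] by (simp add: Bochner_Integration.integral_diff)
  finally show ?thesis using assms unfolding critical_offspring_def by simp
qed

lemma set_step_pmf_ge: "x \<in> set_pmf (step_pmf \<mu>) \<Longrightarrow> -1 \<le> x"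
  unfolding step_pmf_def by auto

lemma pmf_step_pmf: "pmf (step_pmf \<mu>) (int k - 1) = pmf \<mu> k"
  unfolding step_pmf_def by (rule pmf_map_inj') (auto simp: inj_def)

lemma critical_offspring_exists_ge_2:
  assumes crit: "critical_offspring \<mu>" and "pmf \<mu> 0 > 0"
  shows "\<exists>d\<ge>2. pmf \<mu> d > 0"
proof (rule ccontr)
  assume "\<not> ?thesis"
  then have zero: "pmf \<mu> d = 0" if "d \<ge> 2" for d
    using that pmf_nonneg[of \<mu> d] by fastforce
  have "measure_pmf.expectation \<mu> real = (\<Sum>a\<in>{1::nat}. real a * pmf \<mu> a)"
  proof (rule integral_measure_pmf_real)
    fix a assume "a \<in> set_pmf \<mu>" "real a \<noteq> 0"
    then show "a \<in> {1}" using zero[of a] by (cases "a \<ge> 2") (auto simp: set_pmf_eq)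
  qed auto
  then have "pmf \<mu> 1 = 1" using crit by (simp add: critical_offspring_def)
  moreover have "pmf \<mu> 0 + pmf \<mu> 1 \<le> 1"
    using measure_pmf.prob_le_1[of \<mu> "{0, 1}"] by (simp add: measure_measure_pmf_finite)
  ultimately show False using \<open>pmf \<mu> 0 > 0\<close> by simp
qed

lemma prob_walk_eq_neg1_eq_0:
  assumes "pmf \<mu> 0 = 0"
  shows "measure_pmf.prob (steps_pmf \<mu> n) {\<omega>. walk \<omega> n = -1} = 0"
proof -
  have "walk \<omega> n \<ge> 0" if \<omega>: "\<omega> \<in> set_pmf (steps_pmf \<mu> n)" for \<omega>
  proof -
    have "\<omega> i \<ge> 0" if "i < n" for i
    proof -
      have "\<omega> i \<in> set_pmf (step_pmf \<mu>)"
        using set_Pi_pmf_subset'[of "{..<n}" 0 "\<lambda>_. step_pmf \<mu>"] \<omega> \<open>i < n\<close>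
        by (auto simp: steps_pmf_def PiE_dflt_def)
      then obtain k where "k \<in> set_pmf \<mu>" and "\<omega> i = int k - 1" by (auto simp: step_pmf_def)
      with assms show ?thesis by (cases k) (auto simp: set_pmf_eq)
    qed
    then show ?thesis unfolding walk_def by (intro sum_nonneg) auto
  qed
  then have "set_pmf (steps_pmf \<mu> n) \<inter> {\<omega>. walk \<omega> n = -1} = {}" by fastforce
  then show ?thesis by (simp add: measure_pmf_zero_iff)
qed

lemma prob_steps_far_and_end_le:
  assumes crit: "critical_offspring \<mu>" and "\<epsilon> > 0"
  shows "\<exists>a>0. \<forall>n. measure_pmf.prob (steps_pmf \<mu> n)
           {\<omega>. real_of_int (Max ((\<lambda>m. \<bar>walk \<omega> m\<bar>) ` {0..n})) \<ge> \<epsilon> * real n \<and> walk \<omega> n = -1}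
           \<le> 2 * (real n + 1) * exp (- a * real n)"
proof -
  obtain a where "a > 0" and far: "\<And>n. measure_pmf.prob (steps_pmf \<mu> n)
      {\<omega>. real_of_int (Max ((\<lambda>m. \<bar>walk \<omega> m\<bar>) ` {0..n})) \<ge> \<epsilon> * real n \<and> walk \<omega> n \<le> 0}
        \<le> 2 * (real n + 1) * exp (- a * real n)"
    using prob_walk_far_and_ends_nonpos[OF integrable_step_pmf[OF crit] _ set_step_pmf_ge[of _ \<mu>] \<open>\<epsilon> > 0\<close>]
      expectation_step_pmf[OF crit]
    unfolding steps_pmf_def by auto
  have "measure_pmf.prob (steps_pmf \<mu> n)
           {\<omega>. real_of_int (Max ((\<lambda>m. \<bar>walk \<omega> m\<bar>) ` {0..n})) \<ge> \<epsilon> * real n \<and> walk \<omega> n = -1}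
           \<le> 2 * (real n + 1) * exp (- a * real n)" for n
    by (rule order_trans[OF measure_pmf.finite_measure_mono far]) auto
  with \<open>a > 0\<close> show ?thesis by blast
qed

lemma prob_steps_end_ge:
  assumes crit: "critical_offspring \<mu>" and "pmf \<mu> 0 > 0" and \<eta>: "\<eta> > 0"
  shows "\<exists>N. \<forall>n\<ge>N. measure_pmf.prob (steps_pmf \<mu> n) {\<omega>. walk \<omega> n = -1} > 0 \<longrightarrow>
           exp (- \<eta> * real n) \<le> measure_pmf.prob (steps_pmf \<mu> n) {\<omega>. walk \<omega> n = -1}"
proof -
  let ?p = "step_pmf \<mu>"
  obtain d where "d \<ge> 2" and "pmf \<mu> d > 0"
    using critical_offspring_exists_ge_2[OF crit \<open>pmf \<mu> 0 > 0\<close>] by blast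
  then have "pmf ?p (-1) > 0" and "pmf ?p (int (d - 1)) > 0"
    using \<open>pmf \<mu> 0 > 0\<close> pmf_step_pmf[of \<mu> 0] pmf_step_pmf[of \<mu> d] by (auto simp: of_nat_diff)
  then have "\<exists>m\<ge>1. exp (- \<eta>' * real m) \<le> pmf (walk_pmf ?p m) 0" if "\<eta>' > 0" for \<eta>'
    using walk_pmf_return_ge[OF integrable_step_pmf[OF crit] expectation_step_pmf[OF crit],
        where u = "d - 1"] \<open>d \<ge> 2\<close> that by auto
  then obtain N where "\<forall>n\<ge>N. pmf (walk_pmf ?p n) (-1) > 0 \<longrightarrow>
      exp (- \<eta> * real n) \<le> pmf (walk_pmf ?p n) (-1)"
    using walk_pmf_eventually_ge_exp[of ?p \<eta> "-1"] \<eta> by blast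
  moreover have "measure_pmf.prob (steps_pmf \<mu> n) {\<omega>. walk \<omega> n = -1} = pmf (walk_pmf ?p n) (-1)" for n
    by (simp add: walk_pmf_def steps_pmf_def pmf_map vimage_def)
  ultimately show ?thesis by auto
qed

section \<open>The conditional estimate\<close>

lemma ratio_le_exp_of_bounds:
  fixes A B :: "nat \<Rightarrow> real"
  assumes "a > 0" and A: "\<And>n. A n \<le> 2 * (real n + 1) * exp (- a * real n)"
    and B: "\<And>n. n \<ge> N \<Longrightarrow> B n > 0 \<Longrightarrow> exp (- (a / 2) * real n) \<le> B n"
  shows "\<exists>\<delta>>0. \<exists>N. \<forall>n\<ge>N. B n > 0 \<longrightarrow> A n / B n \<le> exp (- \<delta> * real n)"
proof -
  have "\<forall>\<^sub>F n in sequentially. 2 * (real n + 1) * exp (- a * real n) / exp (- (a / 2) * real n)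
          \<le> exp (- (a / 4) * real n)"
    using \<open>a > 0\<close> by real_asymp
  then obtain N' where ratio: "\<And>n. n \<ge> N' \<Longrightarrow>
      2 * (real n + 1) * exp (- a * real n) / exp (- (a / 2) * real n) \<le> exp (- (a / 4) * real n)"
    by (auto simp: eventually_sequentially)
  have "A n / B n \<le> exp (- (a / 4) * real n)" if "n \<ge> max N N'" and "B n > 0" for n
  proof -
    have "A n / B n \<le> 2 * (real n + 1) * exp (- a * real n) / exp (- (a / 2) * real n)"
      using A[of n] B[of n] that by (intro frac_le) auto
    also have "\<dots> \<le> exp (- (a / 4) * real n)" using ratio[of n] that by simp
    finally show ?thesis .
  qed
  then show ?thesis using \<open>a > 0\<close> by (intro exI[of _ "a / 4"] conjI exI[of _ "max N N'"] allI impI) auto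
qed

theorem mainTheorem14:
  fixes \<mu> :: "nat pmf" and \<epsilon> :: real
  assumes "critical_offspring \<mu>" and "\<epsilon> > 0"
  shows "\<exists>\<delta>>0. \<exists>N. \<forall>n\<ge>N.
           measure_pmf.prob (steps_pmf \<mu> n) {\<omega>. walk \<omega> n = -1} > 0 \<longrightarrow>
           measure_pmf.prob (steps_pmf \<mu> n)
             {\<omega>. real_of_int (Max ((\<lambda>m. \<bar>walk \<omega> m\<bar>) ` {0..n})) \<ge> \<epsilon> * real n \<and> walk \<omega> n = -1}
           / measure_pmf.prob (steps_pmf \<mu> n) {\<omega>. walk \<omega> n = -1}
           \<le> exp (- \<delta> * real n)"
proof (cases "pmf \<mu> 0 = 0")
  case True
  then show ?thesis by (intro exI[of _ 1]) (simp add: prob_walk_eq_neg1_eq_0)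
next
  case False
  then have "pmf \<mu> 0 > 0" by (simp add: order.strict_iff_order)
  obtain a where "a > 0" and numerator: "\<And>n. measure_pmf.prob (steps_pmf \<mu> n)
      {\<omega>. real_of_int (Max ((\<lambda>m. \<bar>walk \<omega> m\<bar>) ` {0..n})) \<ge> \<epsilon> * real n \<and> walk \<omega> n = -1}
        \<le> 2 * (real n + 1) * exp (- a * real n)"
    using prob_steps_far_and_end_le[OF assms] by blast
  obtain N where denominator: "\<And>n. n \<ge> N \<Longrightarrow> measure_pmf.prob (steps_pmf \<mu> n) {\<omega>. walk \<omega> n = -1} > 0 \<Longrightarrow>
      exp (- (a / 2) * real n) \<le> measure_pmf.prob (steps_pmf \<mu> n) {\<omega>. walk \<omega> n = -1}"
    using prob_steps_end_ge[OF assms(1) \<open>pmf \<mu> 0 > 0\<close>, of "a / 2"] \<open>a > 0\<close> by auto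
  show ?thesis by (rule ratio_le_exp_of_bounds[OF \<open>a > 0\<close> numerator denominator])
qed

end
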